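(* Consider a single-machine instance as defined in the context in which all jobs have the same weight ($w_j=w_k$ for all $j,k\in J$). Then the schedule produced by the WSPT rule, i.e. any schedule that orders the jobs in nondecreasing order of $p_j/w_j$ (equivalently, nondecreasing processing time), is optimal.
   Context: An instance consists of a finite set $J$ of jobs, each job $j$ having a processing time $p_j>0$ and a weight $w_j>0$, a common deadline $d\ge 0$, and a single machine. A schedule is a sequence $\pi$ containing every job of $J$ exactly once, processed consecutively without idle time starting at time $0$: the start time of job $j$ is $S_j=\sum_{k \text{ before } j \text{ in } \pi} p_k$ and its completion time is $C_j=S_j+p_j$. Let $J_{\mathrm{pri}}(\pi)=\{j : S_j<d\}$ and $J_{\mathrm{late}}(\pi)=\{j: S_j\ge d\}$. The cost of $\pi$ is $$\phi(\pi)=\sum_{j\in J_{\mathrm{pri}}(\pi)} w_j p_j+\sum_{j\in J_{\mathrm{late}}(\pi)} w_j\,(C_j-d),$$ and $\pi$ is optimal if $\phi(\pi)$ is minimal over all schedules of $J$. (This models total weighted flowtime minimization where each release date $r_j\le d$ is a decision variable.) *)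

theory Defs
  imports Main "HOL-Library.Multiset" Complex_Main
begin

definition is_schedule :: "'a set \<Rightarrow> 'a list \<Rightarrow> bool" where
  "is_schedule J \<pi> \<longleftrightarrow> distinct \<pi> \<and> set \<pi> = J"

definition start_time :: "('a \<Rightarrow> real) \<Rightarrow> 'a list \<Rightarrow> nat \<Rightarrow> real" where
  "start_time p \<pi> k = sum_list (map p (take k \<pi>))"

definition completion_time :: "('a \<Rightarrow> real) \<Rightarrow> 'a list \<Rightarrow> nat \<Rightarrow> real" where
  "completion_time p \<pi> k = start_time p \<pi> k + p (\<pi> ! k)"

definition cost :: "('a \<Rightarrow> real) \<Rightarrow> ('a \<Rightarrow> real) \<Rightarrow> real \<Rightarrow> 'a list \<Rightarrow> real" where
  "cost p w d \<pi> = (\<Sum>k<length \<pi>.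
      if start_time p \<pi> k < d then w (\<pi> ! k) * p (\<pi> ! k)
      else w (\<pi> ! k) * (completion_time p \<pi> k - d))"

definition optimal_schedule :: "'a set \<Rightarrow> ('a \<Rightarrow> real) \<Rightarrow> ('a \<Rightarrow> real) \<Rightarrow> real \<Rightarrow> 'a list \<Rightarrow> bool" where
  "optimal_schedule J p w d \<pi> \<longleftrightarrow> is_schedule J \<pi> \<and>
     (\<forall>\<sigma>. is_schedule J \<sigma> \<longrightarrow> cost p w d \<pi> \<le> cost p w d \<sigma>)"

definition wspt_order :: "('a \<Rightarrow> real) \<Rightarrow> ('a \<Rightarrow> real) \<Rightarrow> 'a list \<Rightarrow> bool" where
  "wspt_order p w \<pi> \<longleftrightarrow> sorted (map (\<lambda>j. p j / w j) \<pi>)"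

end

theory Submission
  imports Defs
begin

text \<open>With a common weight c the cost of a schedule is c times the total processing
  time plus c times the total tardiness of the start times beyond d. The first part does
  not depend on the order, and sorting by processing time minimises every start time,
  hence every term of the second part.\<close>

lemma sum_list_take_Suc_insort_le:
  fixes x :: "'a::{linorder, ordered_comm_monoid_add}"
  shows "sum_list (take (Suc k) (insort x zs)) \<le> x + sum_list (take k zs)"
proof (induction zs arbitrary: k)
  case Nil
  then show ?case by simp
next
  case (Cons z zs)
  show ?case
  proof (cases "x \<le> z")
    case True
    then show ?thesis by simp
  next
    case False
    show ?thesis
    proof (cases k)
      case 0
      then show ?thesis using False by simp
    next
      case (Suc k')
      have "z + sum_list (take (Suc k') (insort x zs)) \<le> z + (x + sum_list (take k' zs))"
        using Cons.IH by (rule add_left_mono)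
      then show ?thesis using False Suc by (simp add: ac_simps)
    qed
  qed
qed

lemma sum_list_take_sort_le:
  fixes xs :: "'a::{linorder, ordered_comm_monoid_add} list"
  shows "sum_list (take k (sort xs)) \<le> sum_list (take k xs)"
proof (induction xs arbitrary: k)
  case Nil
  then show ?case by simp
next
  case (Cons x xs)
  show ?case
  proof (cases k)
    case 0
    then show ?thesis by simp
  next
    case (Suc k')
    have "sum_list (take k (sort (x # xs))) \<le> x + sum_list (take k' (sort xs))"
      using Suc sum_list_take_Suc_insort_le by simp
    also have "\<dots> \<le> x + sum_list (take k' xs)"
      using Cons.IH by (rule add_left_mono)
    finally show ?thesis using Suc by simp
  qed
qed

lemma start_time_le_if_sorted:
  assumes "sorted (map p \<pi>)" and "mset \<pi> = mset \<sigma>"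
  shows "start_time p \<pi> k \<le> start_time p \<sigma> k"
proof -
  have "map p \<pi> = sort (map p \<sigma>)"
    using assms by (metis mset_map properties_for_sort)
  then show ?thesis
    unfolding start_time_def using sum_list_take_sort_le by (metis take_map)
qed

lemma mset_eq_if_schedules:
  assumes "is_schedule J \<pi>" and "is_schedule J \<sigma>"
  shows "mset \<pi> = mset \<sigma>"
  using assms unfolding is_schedule_def by (metis set_eq_iff_mset_eq_distinct)

lemma wspt_order_uniform_weight_iff:
  assumes "c > 0" and "\<And>j. j \<in> set \<pi> \<Longrightarrow> w j = c"
  shows "wspt_order p w \<pi> \<longleftrightarrow> sorted (map p \<pi>)"
proof -
  have "map (\<lambda>j. p j / w j) \<pi> = map (\<lambda>x. x / c) (map p \<pi>)"
    using assms(2) by simp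
  then have "wspt_order p w \<pi> \<longleftrightarrow> sorted (map (\<lambda>x. x / c) (map p \<pi>))"
    unfolding wspt_order_def by (rule arg_cong)
  also have "\<dots> \<longleftrightarrow> sorted (map p \<pi>)"
    using assms(1) by (simp add: sorted_iff_nth_mono divide_le_cancel)
  finally show ?thesis .
qed

lemma cost_uniform_weight:
  assumes "is_schedule J \<pi>" and "\<And>j. j \<in> J \<Longrightarrow> w j = c"
  shows "cost p w d \<pi> =
    c * (sum_list (map p \<pi>) + (\<Sum>k<length \<pi>. max 0 (start_time p \<pi> k - d)))"
proof -
  have "cost p w d \<pi> = (\<Sum>k<length \<pi>. c * (p (\<pi> ! k) + max 0 (start_time p \<pi> k - d)))"
    unfolding cost_def
  proof (rule sum.cong)
    fix k
    assume "k \<in> {..<length \<pi>}"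
    then have "w (\<pi> ! k) = c"
      using assms unfolding is_schedule_def by auto
    then show "(if start_time p \<pi> k < d then w (\<pi> ! k) * p (\<pi> ! k)
        else w (\<pi> ! k) * (completion_time p \<pi> k - d)) =
      c * (p (\<pi> ! k) + max 0 (start_time p \<pi> k - d))"
      by (auto simp: completion_time_def algebra_simps max_def)
  qed simp
  also have "\<dots> = c * (sum_list (map p \<pi>) + (\<Sum>k<length \<pi>. max 0 (start_time p \<pi> k - d)))"
    by (simp add: distrib_left sum.distrib sum_distrib_left sum_list_sum_nth atLeast0LessThan)
  finally show ?thesis .
qed

theorem theorem2:
  fixes J :: "'a set" and p w :: "'a \<Rightarrow> real" and d :: real and \<pi> :: "'a list"
  assumes "finite J"
    and "\<And>j. j \<in> J \<Longrightarrow> p j > 0"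
    and "\<And>j. j \<in> J \<Longrightarrow> w j > 0"
    and "d \<ge> 0"
    and "\<And>j k. j \<in> J \<Longrightarrow> k \<in> J \<Longrightarrow> w j = w k"
    and "is_schedule J \<pi>"
    and "wspt_order p w \<pi>"
  shows "optimal_schedule J p w d \<pi>"
proof -
  obtain c where "c > 0" and weight: "\<And>j. j \<in> J \<Longrightarrow> w j = c"
    using assms(3,5) by (metis zero_less_one ex_in_conv)
  have sorted: "sorted (map p \<pi>)"
    using wspt_order_uniform_weight_iff[OF \<open>c > 0\<close>, of \<pi> w p] weight assms(6,7)
    unfolding is_schedule_def by blast
  have "cost p w d \<pi> \<le> cost p w d \<sigma>" if "is_schedule J \<sigma>" for \<sigma>
  proof -
    have perm: "mset \<pi> = mset \<sigma>"
      using assms(6) that by (rule mset_eq_if_schedules)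
    have "(\<Sum>k<length \<pi>. max 0 (start_time p \<pi> k - d))
        \<le> (\<Sum>k<length \<sigma>. max 0 (start_time p \<sigma> k - d))"
      using start_time_le_if_sorted[OF sorted perm] mset_eq_length[OF perm]
      by (metis (no_types, lifting) diff_right_mono max.mono order_refl sum_mono)
    moreover have "sum_list (map p \<pi>) = sum_list (map p \<sigma>)"
      using perm by (metis mset_map sum_mset_sum_list)
    ultimately show ?thesis
      using cost_uniform_weight[OF assms(6) weight] cost_uniform_weight[OF that weight] \<open>c > 0\<close>
      by simp
  qed
  then show ?thesis
    using assms(6) by (simp add: optimal_schedule_def)
qed

end
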